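(* Let $n\ge 2$ be an integer. Let $f(z)=\sum_{j\ge 1} b_j z^j$ be analytic in the unit disc $\mathbb{D}$ with $b_j\ge 0$ for all $j\ge 1$ and $\|f\|_{\mathcal{B}}\le 1$, and suppose $f$ is extremal for the restricted problem $$\sup\Big\{ \mathcal{F}_n(g)=\sum_{k=1}^n k|c_k|^2 \,:\, \|g\|_{\mathcal{B}}\le 1,\ g(z)=\sum_{k=1}^\infty c_k z^k,\ c_j\ge 0 \text{ for all } j\ge 1\Big\},$$ i.e. $f$ attains this supremum. If $1\le k<m\le n$ and $b_k>0$, then $$ b_m\le \frac{m-k}{2m}\, b_k. $$
   Context: $\mathbb{D}$ is the open unit disc in $\mathbb{C}$. The Bloch space $\mathcal{B}$ consists of analytic functions $f$ on $\mathbb{D}$ with finite norm $\|f\|_{\mathcal{B}}=|f(0)|+\sup_{z\in\mathbb{D}}(1-|z|^2)|f'(z)|$. *)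

theory Defs
  imports "HOL-Complex_Analysis.Complex_Analysis"
begin

definition taylor_coeff :: "(complex \<Rightarrow> complex) \<Rightarrow> nat \<Rightarrow> complex" where
  "taylor_coeff g k = (deriv ^^ k) g 0 / of_nat (fact k)"

definition bloch_norm :: "(complex \<Rightarrow> complex) \<Rightarrow> ereal" where
  "bloch_norm g = ereal (norm (g 0)) +
     (SUP z\<in>ball 0 1. ereal ((1 - (norm z)\<^sup>2) * norm (deriv g z)))"

definition admissible :: "(complex \<Rightarrow> complex) \<Rightarrow> bool" where
  "admissible g \<longleftrightarrow> g holomorphic_on ball 0 1 \<and> g 0 = 0 \<and>
     (\<forall>j\<ge>1. taylor_coeff g j \<in> \<real> \<and> 0 \<le> Re (taylor_coeff g j)) \<and>
     bloch_norm g \<le> 1"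

definition F_fun :: "nat \<Rightarrow> (complex \<Rightarrow> complex) \<Rightarrow> real" where
  "F_fun n g = (\<Sum>k=1..n. real k * (norm (taylor_coeff g k))\<^sup>2)"

end

theory Submission
  imports Defs
begin

text \<open>Compare f with the competitor g obtained by deleting the term b z^k of f and adding
  (k b / m) z^m.  On the derivative this moves the coefficient k b from z^(k-1) to the higher
  power z^(m-1), so g'(r) \<le> f'(r) on [0,1); since g has nonnegative coefficients,
  |g'(z)| \<le> g'(|z|), hence g is again admissible.  For b = b_k, maximality of f then gives
  m ((b_m + k b_k / m)^2 - b_m^2) \<le> k b_k^2, which rearranges to the claim.\<close>

lemma taylor_coeff_eq_fps_nth:
  assumes "f has_fps_expansion F"
  shows "taylor_coeff f j = fps_nth F j"
  using fps_nth_fps_expansion[OF assms] by (simp add: taylor_coeff_def)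

lemma deriv_sums_taylor_coeff:
  assumes hol: "f holomorphic_on ball 0 r" and w: "w \<in> ball 0 r"
  shows "(\<lambda>j. of_nat (Suc j) * taylor_coeff f (Suc j) * w ^ j) sums deriv f w"
proof -
  have "deriv f holomorphic_on ball 0 r" using hol by (intro holomorphic_deriv) auto
  from holomorphic_power_series[OF this w]
  have "(\<lambda>j. (deriv ^^ j) (deriv f) 0 / fact j * w ^ j) sums deriv f w" by simp
  moreover have "(deriv ^^ j) (deriv f) 0 / fact j = of_nat (Suc j) * taylor_coeff f (Suc j)" for j
  proof -
    have "(deriv ^^ j) (deriv f) = (deriv ^^ Suc j) f"
      by (simp add: funpow_Suc_right del: funpow.simps)
    moreover have "(of_nat (fact (Suc j)) :: complex) = of_nat (Suc j) * fact j"
      by (simp only: fact_Suc of_nat_mult of_nat_fact of_nat_id)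
    ultimately show ?thesis unfolding taylor_coeff_def
      by (simp del: of_nat_Suc fact_Suc)
  qed
  ultimately show ?thesis by simp
qed

lemma norm_deriv_le_Re_deriv_norm:
  assumes hol: "h holomorphic_on ball 0 r"
    and coeffs: "\<forall>j\<ge>1. taylor_coeff h j \<in> \<real> \<and> 0 \<le> Re (taylor_coeff h j)"
    and z: "z \<in> ball 0 r"
  shows "norm (deriv h z) \<le> Re (deriv h (of_real (norm z)))"
proof -
  define a where "a j = of_nat (Suc j) * taylor_coeff h (Suc j)" for j
  have a_real: "a j = of_real (Re (a j))" and a_nonneg: "0 \<le> Re (a j)" for j
    using coeffs[rule_format, of "Suc j"] by (auto simp: a_def complex_is_Real_iff complex_eq_iff)
  have norm_term: "norm (a j * z ^ j) = Re (a j * of_real (norm z) ^ j)" for j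
    by (subst (1 2) a_real) (simp add: norm_mult norm_power a_nonneg flip: of_real_power)
  have at_z: "(\<lambda>j. a j * z ^ j) sums deriv h z"
    using deriv_sums_taylor_coeff[OF hol z] by (simp add: a_def)
  have "(\<lambda>j. a j * of_real (norm z) ^ j) sums deriv h (of_real (norm z))"
    using deriv_sums_taylor_coeff[OF hol, of "of_real (norm z)"] z by (simp add: a_def)
  then have norms: "(\<lambda>j. norm (a j * z ^ j)) sums Re (deriv h (of_real (norm z)))"
    unfolding norm_term sums_complex_iff by simp
  have "norm (deriv h z) = norm (\<Sum>j. a j * z ^ j)"
    using at_z by (simp add: sums_iff)
  also have "\<dots> \<le> (\<Sum>j. norm (a j * z ^ j))"
    using norms by (intro summable_norm) (simp add: sums_iff)
  also have "\<dots> = Re (deriv h (of_real (norm z)))"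
    using norms by (simp add: sums_iff)
  finally show ?thesis .
qed

lemma bloch_norm_mono:
  assumes "norm (g 0) \<le> norm (f 0)"
    and "\<And>z. z \<in> ball 0 1 \<Longrightarrow> \<exists>w\<in>ball 0 1.
           (1 - (norm z)\<^sup>2) * norm (deriv g z) \<le> (1 - (norm w)\<^sup>2) * norm (deriv f w)"
  shows "bloch_norm g \<le> bloch_norm f"
  unfolding bloch_norm_def using assms by (intro add_mono SUP_mono) auto

definition coeff_shift :: "(complex \<Rightarrow> complex) \<Rightarrow> nat \<Rightarrow> nat \<Rightarrow> real \<Rightarrow> complex \<Rightarrow> complex" where
  "coeff_shift f k m b z = f z - of_real b * z ^ k + of_real (real k * b / real m) * z ^ m"

lemma taylor_coeff_coeff_shift:
  assumes "f holomorphic_on ball 0 1"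
  shows "taylor_coeff (coeff_shift f k m b) j = taylor_coeff f j - (if j = k then of_real b else 0)
           + (if j = m then of_real (real k * b / real m) else 0)"
proof -
  have "f has_fps_expansion fps_expansion f 0"
    using assms by (intro has_fps_expansion_fps_expansion[of "ball 0 1"]) auto
  then have "coeff_shift f k m b has_fps_expansion fps_expansion f 0
      - fps_const (of_real b) * fps_X ^ k + fps_const (of_real (real k * b / real m)) * fps_X ^ m"
    unfolding coeff_shift_def [abs_def]
    by (intro has_fps_expansion_add has_fps_expansion_diff has_fps_expansion_cmult_left
        has_fps_expansion_fps_X_power)
  with \<open>f has_fps_expansion _\<close> show ?thesis by (simp add: taylor_coeff_eq_fps_nth)
qed

lemma deriv_coeff_shift:
  assumes "f holomorphic_on ball 0 1" and "z \<in> ball 0 1" and "m > 0"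
  shows "deriv (coeff_shift f k m b) z = deriv f z - of_real (real k * b) * (z ^ (k - 1) - z ^ (m - 1))"
proof -
  have "(f has_field_derivative deriv f z) (at z)"
    using holomorphic_derivI[OF assms(1) _ assms(2)] by auto
  then have "(coeff_shift f k m b has_field_derivative deriv f z - of_real b * (of_nat k * z ^ (k - 1))
      + of_real (real k * b / real m) * (of_nat m * z ^ (m - 1))) (at z)"
    unfolding coeff_shift_def [abs_def] by (auto intro!: derivative_eq_intros)
  then show ?thesis
    using \<open>m > 0\<close> by (simp add: DERIV_imp_deriv algebra_simps)
qed

lemma admissible_coeff_shift:
  assumes adm: "admissible f" and "1 \<le> k" and "k < m" and "0 \<le> b" and "b \<le> Re (taylor_coeff f k)"
  shows "admissible (coeff_shift f k m b)"
proof -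
  let ?g = "coeff_shift f k m b"
  from adm have hol: "f holomorphic_on ball 0 1" and f0: "f 0 = 0"
    and coeffs: "\<forall>j\<ge>1. taylor_coeff f j \<in> \<real> \<and> 0 \<le> Re (taylor_coeff f j)"
    and "bloch_norm f \<le> 1"
    unfolding admissible_def by auto
  have hol_g: "?g holomorphic_on ball 0 1"
    unfolding coeff_shift_def [abs_def] by (intro holomorphic_intros hol)
  have g0: "?g 0 = 0"
    using f0 assms by (simp add: coeff_shift_def power_0_left)
  have coeffs_g: "\<forall>j\<ge>1. taylor_coeff ?g j \<in> \<real> \<and> 0 \<le> Re (taylor_coeff ?g j)"
    using coeffs assms by (auto simp: taylor_coeff_coeff_shift[OF hol])
  have deriv_le: "(1 - (norm z)\<^sup>2) * norm (deriv ?g z)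
      \<le> (1 - (norm (of_real (norm z) :: complex))\<^sup>2) * norm (deriv f (of_real (norm z)))"
    if z: "z \<in> ball 0 1" for z
  proof -
    define r where "r = norm z"
    have r: "0 \<le> r" "r < 1" and r_in: "complex_of_real r \<in> ball 0 1"
      using z by (auto simp: r_def)
    have "norm (deriv ?g z) \<le> Re (deriv ?g (of_real r))"
      unfolding r_def by (rule norm_deriv_le_Re_deriv_norm[OF hol_g coeffs_g z])
    also have "\<dots> = Re (deriv f (of_real r)) - real k * b * (r ^ (k - 1) - r ^ (m - 1))"
      using deriv_coeff_shift[OF hol r_in] assms by (simp flip: of_real_power)
    also have "\<dots> \<le> Re (deriv f (of_real r))"
      using power_decreasing[of "k - 1" "m - 1" r] r assms by simp
    also have "\<dots> \<le> norm (deriv f (of_real r))"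
      by (rule complex_Re_le_cmod)
    finally have "norm (deriv ?g z) \<le> norm (deriv f (of_real r))" .
    moreover have "0 \<le> 1 - (norm z)\<^sup>2"
      using z by (simp add: abs_square_le_1 less_imp_le)
    ultimately show ?thesis
      using r by (simp add: r_def mult_left_mono)
  qed
  have "bloch_norm ?g \<le> bloch_norm f"
  proof (rule bloch_norm_mono)
    show "norm (?g 0) \<le> norm (f 0)" using f0 g0 by simp
    show "\<exists>w\<in>ball 0 1. (1 - (norm z)\<^sup>2) * norm (deriv ?g z) \<le> (1 - (norm w)\<^sup>2) * norm (deriv f w)"
      if "z \<in> ball 0 1" for z
      using deriv_le[OF that] that by (intro bexI[of _ "of_real (norm z)"]) auto
  qed
  with \<open>bloch_norm f \<le> 1\<close> hol_g g0 coeffs_g show ?thesis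
    unfolding admissible_def by auto
qed

lemma F_fun_diff:
  assumes "S \<subseteq> {1..n}" and "\<And>j. j \<in> {1..n} - S \<Longrightarrow> taylor_coeff g j = taylor_coeff f j"
  shows "F_fun n g - F_fun n f
           = (\<Sum>j\<in>S. real j * ((norm (taylor_coeff g j))\<^sup>2 - (norm (taylor_coeff f j))\<^sup>2))"
proof -
  have "F_fun n g - F_fun n f
      = (\<Sum>j=1..n. real j * ((norm (taylor_coeff g j))\<^sup>2 - (norm (taylor_coeff f j))\<^sup>2))"
    by (simp add: F_fun_def right_diff_distrib sum_subtractf)
  also have "\<dots> = (\<Sum>j\<in>S. real j * ((norm (taylor_coeff g j))\<^sup>2 - (norm (taylor_coeff f j))\<^sup>2))"
    using assms by (intro sum.mono_neutral_right) auto
  finally show ?thesis .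
qed

lemma F_fun_coeff_shift:
  assumes "admissible f" and "1 \<le> k" and "k < m" and "m \<le> n"
  defines "bk \<equiv> Re (taylor_coeff f k)" and "bm \<equiv> Re (taylor_coeff f m)"
  shows "F_fun n (coeff_shift f k m b) - F_fun n f
           = real k * ((bk - b)\<^sup>2 - bk\<^sup>2) + real m * ((bm + real k * b / real m)\<^sup>2 - bm\<^sup>2)"
proof -
  let ?g = "coeff_shift f k m b"
  have hol: "f holomorphic_on ball 0 1"
    and real_coeffs: "\<And>j. 1 \<le> j \<Longrightarrow> taylor_coeff f j = of_real (Re (taylor_coeff f j))"
    using \<open>admissible f\<close> by (auto simp: admissible_def complex_is_Real_iff complex_eq_iff)
  have "F_fun n ?g - F_fun n f
      = (\<Sum>j\<in>{k, m}. real j * ((norm (taylor_coeff ?g j))\<^sup>2 - (norm (taylor_coeff f j))\<^sup>2))"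
    using assms by (intro F_fun_diff) (auto simp: taylor_coeff_coeff_shift[OF hol])
  moreover have "taylor_coeff f k = of_real bk" and "taylor_coeff f m = of_real bm"
    using assms real_coeffs[of k] real_coeffs[of m] by simp_all
  moreover have "taylor_coeff ?g k = of_real (bk - b)"
    and "taylor_coeff ?g m = of_real (bm + real k * b / real m)"
    using \<open>k < m\<close> calculation(2,3) by (simp_all add: taylor_coeff_coeff_shift[OF hol])
  ultimately show ?thesis
    using \<open>k < m\<close> by (simp del: of_real_diff of_real_add)
qed

theorem lemma2p1:
  fixes n k m :: nat and f :: "complex \<Rightarrow> complex"
  assumes "n \<ge> 2"
    and "admissible f"
    and "\<forall>g. admissible g \<longrightarrow> F_fun n g \<le> F_fun n f"
    and "1 \<le> k" and "k < m" and "m \<le> n"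
    and "Re (taylor_coeff f k) > 0"
  shows "Re (taylor_coeff f m) \<le> (real m - real k) / (2 * real m) * Re (taylor_coeff f k)"
proof -
  define bk bm where "bk = Re (taylor_coeff f k)" and "bm = Re (taylor_coeff f m)"
  define c where "c = real k * bk / real m"
  have "admissible (coeff_shift f k m bk)"
    using assms by (intro admissible_coeff_shift) (auto simp: bk_def)
  then have "F_fun n (coeff_shift f k m bk) - F_fun n f \<le> 0"
    using assms(3) by simp
  then have "real m * ((bm + c)\<^sup>2 - bm\<^sup>2) \<le> real k * bk * bk"
    using F_fun_coeff_shift[OF assms(2,4,5,6), of bk]
    by (simp add: bk_def bm_def c_def power2_eq_square)
  moreover have "real m * ((bm + c)\<^sup>2 - bm\<^sup>2) = real k * bk * (2 * bm + c)"
    using assms by (simp add: c_def power2_eq_square algebra_simps)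
  ultimately have "2 * bm + c \<le> bk"
    using assms by (simp add: bk_def)
  then show ?thesis
    using assms by (simp add: bk_def bm_def c_def field_simps)
qed

end
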